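(* For a semigroup $X$ the following conditions are equivalent: (1) $\upsilon(X)$ is a finite semilattice; (2) $\upsilon(X)$ is an inverse semigroup; (3) the idempotents of the semigroup $\upsilon(X)$ commute, and $\upsilon(X)$ is sub-Clifford or regular; (4) $X$ is a finite linear semilattice, isomorphic to $L_n$ for some $n\in\omega$.
   Context: An upfamily on a set $X$ is a family $\mathcal F$ of nonempty subsets of $X$ such that $F\in\mathcal F$ and $F\subset E\subset X$ imply $E\in\mathcal F$; $\upsilon(X)$ is the set of all upfamilies on $X$. Each $x\in X$ is identified with $\langle x\rangle=\{A\subset X: x\in A\}$. For a family $\mathcal C$ of nonempty subsets, $\langle\mathcal C\rangle=\{A\subset X:\exists C\in\mathcal C,\ C\subset A\}$. For a semigroup $(X,* )$ the operation is extended to $\upsilon(X)$ by $\mathcal A*\mathcal B=\big\langle \bigcup_{a\in A} a*B_a : A\in\mathcal A,\ \{B_a\}_{a\in A}\subset\mathcal B\big\rangle$. A semilattice is a set with an associative, commutative, idempotent operation; a semigroup is linear if $xy\in\{x,y\}$ for all $x,y$. A semigroup $S$ is inverse if each $x$ has a unique $x^{-1}$ with $xx^{-1}x=x$, $x^{-1}xx^{-1}=x^{-1}$; regular if $x\in xSx$ for all $x$; sub-Clifford if it is a union of cancellative subsemigroups. $L_n=\{0,\dots,n-1\}$ with the operation $\min$ ($L_0=\emptyset$). *)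

theory Defs
  imports Main
begin

definition semigroup_on :: "'a set \<Rightarrow> ('a \<Rightarrow> 'a \<Rightarrow> 'a) \<Rightarrow> bool" where
  "semigroup_on S f \<longleftrightarrow> (\<forall>x\<in>S. \<forall>y\<in>S. f x y \<in> S) \<and>
     (\<forall>x\<in>S. \<forall>y\<in>S. \<forall>z\<in>S. f (f x y) z = f x (f y z))"

definition upfamily :: "'a set \<Rightarrow> 'a set set \<Rightarrow> bool" where
  "upfamily X F \<longleftrightarrow> F \<subseteq> Pow X \<and> {} \<notin> F \<and>
     (\<forall>A\<in>F. \<forall>E. A \<subseteq> E \<and> E \<subseteq> X \<longrightarrow> E \<in> F)"

definition upsilon :: "'a set \<Rightarrow> 'a set set set" where
  "upsilon X = {F. upfamily X F}"

definition up_gen :: "'a set \<Rightarrow> 'a set set \<Rightarrow> 'a set set" where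
  "up_gen X C = {E. E \<subseteq> X \<and> (\<exists>D\<in>C. D \<subseteq> E)}"

definition up_mult :: "'a set \<Rightarrow> ('a \<Rightarrow> 'a \<Rightarrow> 'a) \<Rightarrow> 'a set set \<Rightarrow> 'a set set \<Rightarrow> 'a set set" where
  "up_mult X m \<A> \<B> = up_gen X
     {(\<Union>a\<in>A. m a ` (Bs a)) | A Bs. A \<in> \<A> \<and> (\<forall>a\<in>A. Bs a \<in> \<B>)}"

definition semilattice_on :: "'a set \<Rightarrow> ('a \<Rightarrow> 'a \<Rightarrow> 'a) \<Rightarrow> bool" where
  "semilattice_on S f \<longleftrightarrow> semigroup_on S f \<and>
     (\<forall>x\<in>S. \<forall>y\<in>S. f x y = f y x) \<and> (\<forall>x\<in>S. f x x = x)"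

definition linear_on :: "'a set \<Rightarrow> ('a \<Rightarrow> 'a \<Rightarrow> 'a) \<Rightarrow> bool" where
  "linear_on S f \<longleftrightarrow> (\<forall>x\<in>S. \<forall>y\<in>S. f x y \<in> {x, y})"

definition inverse_semigroup_on :: "'a set \<Rightarrow> ('a \<Rightarrow> 'a \<Rightarrow> 'a) \<Rightarrow> bool" where
  "inverse_semigroup_on S f \<longleftrightarrow> semigroup_on S f \<and>
     (\<forall>x\<in>S. \<exists>!y. y \<in> S \<and> f (f x y) x = x \<and> f (f y x) y = y)"

definition regular_on :: "'a set \<Rightarrow> ('a \<Rightarrow> 'a \<Rightarrow> 'a) \<Rightarrow> bool" where
  "regular_on S f \<longleftrightarrow> (\<forall>x\<in>S. \<exists>s\<in>S. f (f x s) x = x)"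

definition cancellative_on :: "'a set \<Rightarrow> ('a \<Rightarrow> 'a \<Rightarrow> 'a) \<Rightarrow> bool" where
  "cancellative_on T f \<longleftrightarrow> (\<forall>a\<in>T. \<forall>b\<in>T. \<forall>c\<in>T.
     (f a b = f a c \<longrightarrow> b = c) \<and> (f b a = f c a \<longrightarrow> b = c))"

definition sub_clifford_on :: "'a set \<Rightarrow> ('a \<Rightarrow> 'a \<Rightarrow> 'a) \<Rightarrow> bool" where
  "sub_clifford_on S f \<longleftrightarrow> (\<forall>x\<in>S. \<exists>T. T \<subseteq> S \<and> x \<in> T \<and>
     (\<forall>a\<in>T. \<forall>b\<in>T. f a b \<in> T) \<and> cancellative_on T f)"

definition idempotents_commute_on :: "'a set \<Rightarrow> ('a \<Rightarrow> 'a \<Rightarrow> 'a) \<Rightarrow> bool" where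
  "idempotents_commute_on S f \<longleftrightarrow> (\<forall>e\<in>S. \<forall>e'\<in>S.
     f e e = e \<and> f e' e' = e' \<longrightarrow> f e e' = f e' e)"

definition iso_to_L :: "'a set \<Rightarrow> ('a \<Rightarrow> 'a \<Rightarrow> 'a) \<Rightarrow> nat \<Rightarrow> bool" where
  "iso_to_L S f n \<longleftrightarrow> (\<exists>h. bij_betw h S {..<n} \<and>
     (\<forall>x\<in>S. \<forall>y\<in>S. h (f x y) = min (h x) (h y)))"

end

theory Submission
  imports Defs
begin

text \<open>
  The basic tool is the membership criterion \<open>C \<in> \<A> \<B> \<longleftrightarrow> {a. {b. a b \<in> C} \<in> \<B>} \<in> \<A>\<close>,
  which gives associativity of \<open>\<upsilon>(X)\<close>. For (3) \<Longrightarrow> (4) we test commutation of idempotents on special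
  upfamilies: principal families \<open>\<langle>A\<rangle>\<close>, families of sets meeting a set, and families of sets
  containing a tail, respectively infinitely many terms, of an injective sequence. They show
  successively that \<open>X\<close> is regular (via powers of an element for the sub-Clifford case), a band
  (maximal subgroups are trivial), commutative, linear, and finally finite (infinite chains
  contain monotone sequences). For (4) \<Longrightarrow> (1), in a finite chain every member of \<open>\<A> \<B>\<close>
  contains a product \<open>A\<^sub>0 B\<^sub>0\<close>, which makes \<open>\<upsilon>(X)\<close> commutative, and every upfamily is
  idempotent; the isomorphism with \<open>L\<^sub>n\<close> is given by the rank function.
\<close>

section \<open>Semigroups, upfamilies and their product\<close>

lemma semigroup_closed: "semigroup_on S f \<Longrightarrow> x \<in> S \<Longrightarrow> y \<in> S \<Longrightarrow> f x y \<in> S"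
  unfolding semigroup_on_def by blast

lemma semigroup_assoc:
  "semigroup_on S f \<Longrightarrow> x \<in> S \<Longrightarrow> y \<in> S \<Longrightarrow> z \<in> S \<Longrightarrow> f (f x y) z = f x (f y z)"
  unfolding semigroup_on_def by blast

lemma upsilonI:
  "F \<subseteq> Pow X \<Longrightarrow> {} \<notin> F \<Longrightarrow> (\<And>A E. A \<in> F \<Longrightarrow> A \<subseteq> E \<Longrightarrow> E \<subseteq> X \<Longrightarrow> E \<in> F)
   \<Longrightarrow> F \<in> upsilon X"
  by (auto simp add: upsilon_def upfamily_def)

lemma upsilon_up: "F \<in> upsilon X \<Longrightarrow> A \<in> F \<Longrightarrow> A \<subseteq> E \<Longrightarrow> E \<subseteq> X \<Longrightarrow> E \<in> F"
  by (auto simp add: upsilon_def upfamily_def)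

lemma upsilon_subset: "F \<in> upsilon X \<Longrightarrow> A \<in> F \<Longrightarrow> A \<subseteq> X"
  by (auto simp add: upsilon_def upfamily_def)

lemma upsilon_nonempty: "F \<in> upsilon X \<Longrightarrow> A \<in> F \<Longrightarrow> A \<noteq> {}"
  by (auto simp add: upsilon_def upfamily_def)

lemma up_mult_iff:
  assumes A: "\<A> \<in> upsilon X" and B: "\<B> \<in> upsilon X"
  shows "C \<in> up_mult X m \<A> \<B> \<longleftrightarrow> C \<subseteq> X \<and> {a\<in>X. {b\<in>X. m a b \<in> C} \<in> \<B>} \<in> \<A>"
proof
  assume "C \<in> up_mult X m \<A> \<B>"
  then obtain A0 Bs where CX: "C \<subseteq> X" and A0: "A0 \<in> \<A>" and Bs: "\<forall>a\<in>A0. Bs a \<in> \<B>"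
    and sub: "(\<Union>a\<in>A0. m a ` (Bs a)) \<subseteq> C"
    unfolding up_mult_def up_gen_def by blast
  have "A0 \<subseteq> {a\<in>X. {b\<in>X. m a b \<in> C} \<in> \<B>}"
  proof
    fix a assume a: "a \<in> A0"
    have "Bs a \<subseteq> {b\<in>X. m a b \<in> C}" using sub a upsilon_subset[OF B] Bs by blast
    then show "a \<in> {a\<in>X. {b\<in>X. m a b \<in> C} \<in> \<B>}"
      using upsilon_up[OF B] Bs a upsilon_subset[OF A A0] by blast
  qed
  then show "C \<subseteq> X \<and> {a\<in>X. {b\<in>X. m a b \<in> C} \<in> \<B>} \<in> \<A>"
    using CX upsilon_up[OF A A0] by blast
next
  assume "C \<subseteq> X \<and> {a\<in>X. {b\<in>X. m a b \<in> C} \<in> \<B>} \<in> \<A>"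
  then show "C \<in> up_mult X m \<A> \<B>"
    unfolding up_mult_def up_gen_def
    by (intro CollectI conjI bexI[of _ "\<Union>a\<in>{a\<in>X. {b\<in>X. m a b \<in> C} \<in> \<B>}. m a ` {b\<in>X. m a b \<in> C}"]
         CollectI exI[of _ "{a\<in>X. {b\<in>X. m a b \<in> C} \<in> \<B>}"] exI[of _ "\<lambda>a. {b\<in>X. m a b \<in> C}"])
       auto
qed

lemma up_mult_closed:
  assumes A: "\<A> \<in> upsilon X" and B: "\<B> \<in> upsilon X"
  shows "up_mult X m \<A> \<B> \<in> upsilon X"
proof (rule upsilonI)
  show "up_mult X m \<A> \<B> \<subseteq> Pow X" using up_mult_iff[OF A B] by blast
  have "{a\<in>X. {b\<in>X. m a b \<in> {}} \<in> \<B>} = {}" using upsilon_nonempty[OF B] by blast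
  then show "{} \<notin> up_mult X m \<A> \<B>"
    unfolding up_mult_iff[OF A B] using upsilon_nonempty[OF A] by auto
next
  fix C E assume "C \<in> up_mult X m \<A> \<B>" and CE: "C \<subseteq> E" and EX: "E \<subseteq> X"
  then have "{a\<in>X. {b\<in>X. m a b \<in> C} \<in> \<B>} \<in> \<A>" using up_mult_iff[OF A B] by blast
  moreover have "{a\<in>X. {b\<in>X. m a b \<in> C} \<in> \<B>} \<subseteq> {a\<in>X. {b\<in>X. m a b \<in> E} \<in> \<B>}"
  proof (intro subsetI CollectI conjI)
    fix a assume "a \<in> {a\<in>X. {b\<in>X. m a b \<in> C} \<in> \<B>}"
    then show "a \<in> X" "{b\<in>X. m a b \<in> E} \<in> \<B>" using upsilon_up[OF B, of _ "{b\<in>X. m a b \<in> E}"] CE by auto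
  qed
  ultimately show "E \<in> up_mult X m \<A> \<B>"
    unfolding up_mult_iff[OF A B] using upsilon_up[OF A] EX by blast
qed

lemma up_mult_assoc:
  assumes S: "semigroup_on X m"
    and A: "\<A> \<in> upsilon X" and B: "\<B> \<in> upsilon X" and C: "\<C> \<in> upsilon X"
  shows "up_mult X m (up_mult X m \<A> \<B>) \<C> = up_mult X m \<A> (up_mult X m \<B> \<C>)"
proof (rule set_eqI)
  fix D
  show "D \<in> up_mult X m (up_mult X m \<A> \<B>) \<C> \<longleftrightarrow> D \<in> up_mult X m \<A> (up_mult X m \<B> \<C>)"
    unfolding up_mult_iff[OF up_mult_closed[OF A B] C] up_mult_iff[OF A up_mult_closed[OF B C]]
      up_mult_iff[OF A B] up_mult_iff[OF B C]
    by (simp add: semigroup_closed[OF S] semigroup_assoc[OF S] cong: conj_cong)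
qed

lemma semigroup_upsilon: "semigroup_on X m \<Longrightarrow> semigroup_on (upsilon X) (up_mult X m)"
  unfolding semigroup_on_def[of "upsilon X"] using up_mult_closed up_mult_assoc by blast

section \<open>Semilattices and inverse semigroups: (1) \<Longrightarrow> (2) \<Longrightarrow> (3)\<close>

lemma semigroup_idem_absorb:
  "semigroup_on S f \<Longrightarrow> e \<in> S \<Longrightarrow> f e e = e \<Longrightarrow> z \<in> S \<Longrightarrow> f e (f e z) = f e z"
  using semigroup_assoc by metis

lemma semilattice_semigroup: "semilattice_on S f \<Longrightarrow> semigroup_on S f"
  unfolding semilattice_on_def by blast

lemma semilattice_comm: "semilattice_on S f \<Longrightarrow> x \<in> S \<Longrightarrow> y \<in> S \<Longrightarrow> f x y = f y x"
  unfolding semilattice_on_def by blast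

lemma semilattice_idem: "semilattice_on S f \<Longrightarrow> x \<in> S \<Longrightarrow> f x x = x"
  unfolding semilattice_on_def by blast

lemma linear_onD: "linear_on S f \<Longrightarrow> x \<in> S \<Longrightarrow> y \<in> S \<Longrightarrow> f x y = x \<or> f x y = y"
  unfolding linear_on_def by blast

text \<open>In a semilattice every element is its own unique inverse.\<close>

lemma semilattice_inverse:
  assumes L: "semilattice_on S f"
  shows "inverse_semigroup_on S f"
proof -
  note S = semilattice_semigroup[OF L]
  have "\<exists>!y. y \<in> S \<and> f (f x y) x = x \<and> f (f y x) y = y" if x: "x \<in> S" for x
  proof (rule ex1I[of _ x])
    show "x \<in> S \<and> f (f x x) x = x \<and> f (f x x) x = x" using x semilattice_idem[OF L] by simp
    fix y assume y: "y \<in> S \<and> f (f x y) x = x \<and> f (f y x) y = y"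
    have "f (f x y) x = f x y" and "f (f y x) y = f y x"
      using x y semigroup_assoc[OF S] semilattice_comm[OF L] semilattice_idem[OF L] by metis+
    then show "y = x" using x y semilattice_comm[OF L] by metis
  qed
  then show ?thesis unfolding inverse_semigroup_on_def using S by blast
qed

lemma inverse_regular: "inverse_semigroup_on S f \<Longrightarrow> regular_on S f"
  unfolding inverse_semigroup_on_def regular_on_def by blast

text \<open>In an inverse semigroup products of idempotents are idempotent (the inverse \<open>a\<close> of \<open>e g\<close>
  coincides with \<open>g a e\<close>), hence idempotents commute: \<open>e g\<close> and \<open>g e\<close> are both inverses of \<open>e g\<close>.\<close>

lemma inverse_unique:
  "inverse_semigroup_on S f \<Longrightarrow> x \<in> S \<Longrightarrow> y \<in> S \<Longrightarrow> z \<in> S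
   \<Longrightarrow> f (f x y) x = x \<Longrightarrow> f (f y x) y = y \<Longrightarrow> f (f x z) x = x \<Longrightarrow> f (f z x) z = z \<Longrightarrow> y = z"
  unfolding inverse_semigroup_on_def by metis

lemma inverse_idempotent_product:
  assumes I: "inverse_semigroup_on S f"
    and e: "e \<in> S" "f e e = e" and g: "g \<in> S" "f g g = g"
  shows "f (f e g) (f e g) = f e g"
proof -
  have S: "semigroup_on S f" using I unfolding inverse_semigroup_on_def by blast
  note simps = semigroup_closed[OF S] semigroup_assoc[OF S]
    semigroup_idem_absorb[OF S e] semigroup_idem_absorb[OF S g]
  define x where "x = f e g"
  have x: "x \<in> S" using e g simps unfolding x_def by simp
  obtain a where a: "a \<in> S" "f (f x a) x = x" "f (f a x) a = a"
    using I x unfolding inverse_semigroup_on_def by blast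
  txt \<open>Besides \<open>a\<close>, also \<open>g a e\<close> is an inverse of \<open>x = e g\<close>; by uniqueness they agree,
    which forces \<open>a\<close> to be idempotent, and then \<open>x = a\<close>.\<close>
  define b where "b = f g (f a e)"
  have b: "b \<in> S" using a e g simps unfolding b_def by simp
  have "f (f x b) x = f (f x a) x" using a(1) e g simps unfolding x_def b_def by simp
  then have b1: "f (f x b) x = x" using a by simp
  have "f (f b x) b = f g (f (f (f a x) a) e)" using a(1) e g simps unfolding x_def b_def by simp
  also have "\<dots> = b" unfolding b_def by (simp only: a(3))
  finally have b2: "f (f b x) b = b" .
  have ab: "a = b" using inverse_unique[OF I x a(1) b a(2,3) b1 b2] .
  have "f a a = f b b" using ab by simp
  also have "\<dots> = f g (f (f (f a x) a) e)" using a(1) e g simps unfolding x_def b_def by simp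
  also have "\<dots> = b" unfolding b_def by (simp only: a(3))
  finally have aa: "f a a = a" using ab by simp
  have "x = a" using inverse_unique[OF I a(1) x a(1) a(3,2)] aa by simp
  then show ?thesis using aa x_def by simp
qed

lemma inverse_idempotents_commute:
  assumes I: "inverse_semigroup_on S f"
  shows "idempotents_commute_on S f"
  unfolding idempotents_commute_on_def
proof (intro ballI impI)
  have S: "semigroup_on S f" using I unfolding inverse_semigroup_on_def by blast
  fix e g assume e: "e \<in> S" and g: "g \<in> S" and eg: "f e e = e \<and> f g g = g"
  note simps = semigroup_closed[OF S] semigroup_assoc[OF S]
    semigroup_idem_absorb[OF S e] semigroup_idem_absorb[OF S g]
  have x: "f e g \<in> S" "f (f e g) (f e g) = f e g" and y: "f g e \<in> S" "f (f g e) (f g e) = f g e"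
    using inverse_idempotent_product[OF I] e g eg simps by auto
  have "f (f (f e g) (f g e)) (f e g) = f (f e g) (f e g)"
    and "f (f (f g e) (f e g)) (f g e) = f (f g e) (f g e)"
    using e g eg simps by simp_all
  then show "f e g = f g e"
    using inverse_unique[OF I x(1) x(1) y(1)] x y by simp
qed

section \<open>Principal families and families of sets meeting a set\<close>

text \<open>\<open>set_mult m A B = A B\<close>, \<open>principal_family X A = \<langle>A\<rangle>\<close>, and \<open>hitting_family X A\<close> consists of
  the subsets of \<open>X\<close> meeting \<open>A\<close>; for \<open>A A = A\<close> the latter two are idempotents of \<open>\<upsilon>(X)\<close>.\<close>

definition set_mult :: "('a \<Rightarrow> 'a \<Rightarrow> 'a) \<Rightarrow> 'a set \<Rightarrow> 'a set \<Rightarrow> 'a set" where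
  "set_mult m A B = {m a b | a b. a \<in> A \<and> b \<in> B}"

definition principal_family :: "'a set \<Rightarrow> 'a set \<Rightarrow> 'a set set" where
  "principal_family X A = {C. C \<subseteq> X \<and> A \<subseteq> C}"

definition hitting_family :: "'a set \<Rightarrow> 'a set \<Rightarrow> 'a set set" where
  "hitting_family X A = {C. C \<subseteq> X \<and> C \<inter> A \<noteq> {}}"

lemma principal_family_upsilon: "A \<subseteq> X \<Longrightarrow> A \<noteq> {} \<Longrightarrow> principal_family X A \<in> upsilon X"
  by (rule upsilonI) (auto simp: principal_family_def)

lemma hitting_family_upsilon: "A \<subseteq> X \<Longrightarrow> A \<noteq> {} \<Longrightarrow> hitting_family X A \<in> upsilon X"
  by (rule upsilonI) (auto simp: hitting_family_def)

lemma principal_family_inj: "A \<subseteq> X \<Longrightarrow> B \<subseteq> X \<Longrightarrow> principal_family X A = principal_family X B \<Longrightarrow> A = B"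
  unfolding principal_family_def by blast

lemma principal_family_iff: "C \<in> principal_family X A \<longleftrightarrow> C \<subseteq> X \<and> A \<subseteq> C"
  unfolding principal_family_def by blast

lemma principal_family_Collect: "A \<subseteq> X \<Longrightarrow> {x\<in>X. P x} \<in> principal_family X A \<longleftrightarrow> (\<forall>a\<in>A. P a)"
  unfolding principal_family_def by blast

lemma hitting_family_Collect: "A \<subseteq> X \<Longrightarrow> {x\<in>X. P x} \<in> hitting_family X A \<longleftrightarrow> (\<exists>a\<in>A. P a)"
  unfolding hitting_family_def by blast

lemma principal_family_mult:
  assumes "A \<subseteq> X" "A \<noteq> {}" "B \<subseteq> X" "B \<noteq> {}"
    and closed: "\<And>x y. x \<in> X \<Longrightarrow> y \<in> X \<Longrightarrow> m x y \<in> X"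
  shows "up_mult X m (principal_family X A) (principal_family X B) = principal_family X (set_mult m A B)"
proof (rule set_eqI)
  fix C
  have "set_mult m A B \<subseteq> C \<longleftrightarrow> (\<forall>a\<in>A. \<forall>b\<in>B. m a b \<in> C)" unfolding set_mult_def by blast
  then show "C \<in> up_mult X m (principal_family X A) (principal_family X B) \<longleftrightarrow> C \<in> principal_family X (set_mult m A B)"
    unfolding up_mult_iff[OF principal_family_upsilon[OF assms(1,2)] principal_family_upsilon[OF assms(3,4)]]
      principal_family_Collect[OF assms(1)] principal_family_Collect[OF assms(3)]
    unfolding principal_family_iff by blast
qed

lemma principal_family_singleton_mult:
  assumes "x \<in> X" "y \<in> X" and closed: "\<And>x y. x \<in> X \<Longrightarrow> y \<in> X \<Longrightarrow> m x y \<in> X"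
  shows "up_mult X m (principal_family X {x}) (principal_family X {y}) = principal_family X {m x y}"
  using principal_family_mult[of "{x}" X "{y}" m] assms by (simp add: set_mult_def)

lemma principal_hitting_mult:
  assumes "A \<subseteq> X" "A \<noteq> {}" "B \<subseteq> X" "B \<noteq> {}"
  shows "C \<in> up_mult X m (principal_family X A) (hitting_family X B) \<longleftrightarrow> C \<subseteq> X \<and> (\<forall>a\<in>A. \<exists>b\<in>B. m a b \<in> C)"
  unfolding up_mult_iff[OF principal_family_upsilon[OF assms(1,2)] hitting_family_upsilon[OF assms(3,4)]]
    principal_family_Collect[OF assms(1)] hitting_family_Collect[OF assms(3)] ..

lemma hitting_principal_mult:
  assumes "A \<subseteq> X" "A \<noteq> {}" "B \<subseteq> X" "B \<noteq> {}"
  shows "C \<in> up_mult X m (hitting_family X A) (principal_family X B) \<longleftrightarrow> C \<subseteq> X \<and> (\<exists>a\<in>A. \<forall>b\<in>B. m a b \<in> C)"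
  unfolding up_mult_iff[OF hitting_family_upsilon[OF assms(1,2)] principal_family_upsilon[OF assms(3,4)]]
    hitting_family_Collect[OF assms(1)] principal_family_Collect[OF assms(3)] ..

lemma principal_family_idempotent:
  assumes "A \<subseteq> X" "A \<noteq> {}" "set_mult m A A = A" "\<And>x y. x \<in> X \<Longrightarrow> y \<in> X \<Longrightarrow> m x y \<in> X"
  shows "up_mult X m (principal_family X A) (principal_family X A) = principal_family X A"
  using principal_family_mult[OF assms(1,2,1,2,4)] assms(3) by simp

lemma hitting_family_idempotent:
  assumes "A \<subseteq> X" "A \<noteq> {}" "set_mult m A A = A"
  shows "up_mult X m (hitting_family X A) (hitting_family X A) = hitting_family X A"
proof (rule set_eqI)
  fix C
  have "(\<exists>a\<in>A. \<exists>b\<in>A. m a b \<in> C) \<longleftrightarrow> C \<inter> set_mult m A A \<noteq> {}" unfolding set_mult_def by blast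
  then show "C \<in> up_mult X m (hitting_family X A) (hitting_family X A) \<longleftrightarrow> C \<in> hitting_family X A"
    unfolding up_mult_iff[OF hitting_family_upsilon[OF assms(1,2)] hitting_family_upsilon[OF assms(1,2)]]
      hitting_family_Collect[OF assms(1)] using assms(3) by (simp add: hitting_family_def)
qed

section \<open>Consequences of commuting idempotents in \<open>\<upsilon>(X)\<close>\<close>

lemma idempotents_commuteD:
  "idempotents_commute_on S f \<Longrightarrow> a \<in> S \<Longrightarrow> b \<in> S \<Longrightarrow> f a a = a \<Longrightarrow> f b b = b \<Longrightarrow> f a b = f b a"
  unfolding idempotents_commute_on_def by blast

text \<open>Idempotents of \<open>X\<close> commute, since their principal families do.\<close>

lemma base_idempotents_commute:
  assumes S: "semigroup_on X m" and IC: "idempotents_commute_on (upsilon X) (up_mult X m)"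
    and x: "x \<in> X" "m x x = x" and y: "y \<in> X" "m y y = y"
  shows "m x y = m y x"
proof -
  note closed = semigroup_closed[OF S]
  note prod = principal_family_singleton_mult[of _ X _ m, OF _ _ closed]
  have "up_mult X m (principal_family X {x}) (principal_family X {y}) = up_mult X m (principal_family X {y}) (principal_family X {x})"
    using idempotents_commuteD[OF IC] principal_family_upsilon[of "{x}" X] principal_family_upsilon[of "{y}" X]
      prod[OF x(1) x(1)] prod[OF y(1) y(1)] x y by simp
  then have "principal_family X {m x y} = principal_family X {m y x}" using prod x y by simp
  then show ?thesis using principal_family_inj[of "{m x y}" X "{m y x}"] closed x y by simp
qed

text \<open>The group of units of the monoid \<open>e X e\<close>, i.e. the maximal subgroup of \<open>X\<close> at \<open>e\<close>.\<close>

definition unit_group :: "'a set \<Rightarrow> ('a \<Rightarrow> 'a \<Rightarrow> 'a) \<Rightarrow> 'a \<Rightarrow> 'a set" where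
  "unit_group X m e = {u\<in>X. m e u = u \<and> m u e = u \<and>
     (\<exists>v\<in>X. m e v = v \<and> m v e = v \<and> m u v = e \<and> m v u = e)}"

lemma unit_group_mult:
  assumes S: "semigroup_on X m" and e: "e \<in> X"
    and u1: "u1 \<in> unit_group X m e" and u2: "u2 \<in> unit_group X m e"
  shows "m u1 u2 \<in> unit_group X m e"
proof -
  note closed = semigroup_closed[OF S] and assoc = semigroup_assoc[OF S]
  obtain v1 where v1: "v1 \<in> X" "m e v1 = v1" "m v1 e = v1" "m u1 v1 = e" "m v1 u1 = e"
    and u1': "u1 \<in> X" "m e u1 = u1" "m u1 e = u1" using u1 unfolding unit_group_def by blast
  obtain v2 where v2: "v2 \<in> X" "m e v2 = v2" "m v2 e = v2" "m u2 v2 = e" "m v2 u2 = e"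
    and u2': "u2 \<in> X" "m e u2 = u2" "m u2 e = u2" using u2 unfolding unit_group_def by blast
  have "m (m u1 u2) (m v2 v1) = m u1 (m (m u2 v2) v1)" using u1'(1) u2'(1) v1(1) v2(1) closed assoc by simp
  then have r: "m (m u1 u2) (m v2 v1) = e" using u1' v1 v2 by simp
  have "m (m v2 v1) (m u1 u2) = m v2 (m (m v1 u1) u2)" using u1'(1) u2'(1) v1(1) v2(1) closed assoc by simp
  then have l: "m (m v2 v1) (m u1 u2) = e" using u2' v1 v2 by simp
  have "m e (m u1 u2) = m u1 u2" using assoc[of e u1 u2] u1' u2' e by simp
  moreover have "m (m u1 u2) e = m u1 u2" using assoc[of u1 u2 e] u1' u2' e by simp
  moreover have "m e (m v2 v1) = m v2 v1" using assoc[of e v2 v1] v1 v2 e by simp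
  moreover have "m (m v2 v1) e = m v2 v1" using assoc[of v2 v1 e] v1 v2 e by simp
  ultimately show ?thesis unfolding unit_group_def using l r u1' u2' v1 v2 closed by blast
qed

lemma unit_group_square:
  assumes S: "semigroup_on X m" and e: "e \<in> X" "m e e = e"
  shows "set_mult m (unit_group X m e) (unit_group X m e) = unit_group X m e"
proof
  show "set_mult m (unit_group X m e) (unit_group X m e) \<subseteq> unit_group X m e"
    unfolding set_mult_def using unit_group_mult[OF S e(1)] by blast
  have "e \<in> unit_group X m e" unfolding unit_group_def using e by blast
  moreover have "u = m u e" if "u \<in> unit_group X m e" for u using that unfolding unit_group_def by simp
  ultimately show "unit_group X m e \<subseteq> set_mult m (unit_group X m e) (unit_group X m e)"
    unfolding set_mult_def by blast
qed

text \<open>If the idempotents of \<open>\<upsilon>(X)\<close> commute, every maximal subgroup of \<open>X\<close> is trivial: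
  the idempotents \<open>\<langle>G\<rangle>\<close> and the family of sets meeting \<open>G\<close> only commute if \<open>|G| = 1\<close>.\<close>

lemma unit_group_trivial:
  assumes S: "semigroup_on X m" and IC: "idempotents_commute_on (upsilon X) (up_mult X m)"
    and e: "e \<in> X" "m e e = e" and x: "x \<in> unit_group X m e"
  shows "x = e"
proof -
  define G where "G = unit_group X m e"
  have eG: "e \<in> G" unfolding G_def unit_group_def using e by blast
  have G: "G \<subseteq> X" "G \<noteq> {}" using eG unfolding G_def unit_group_def by auto
  have GG: "set_mult m G G = G" unfolding G_def by (rule unit_group_square[OF S e])
  have "up_mult X m (principal_family X G) (hitting_family X G) = up_mult X m (hitting_family X G) (principal_family X G)"
    using idempotents_commuteD[OF IC principal_family_upsilon[OF G] hitting_family_upsilon[OF G]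
        principal_family_idempotent[OF G GG semigroup_closed[OF S]] hitting_family_idempotent[OF G GG]] .
  moreover have "{e} \<in> up_mult X m (principal_family X G) (hitting_family X G)"
  proof -
    have "\<exists>b\<in>G. m a b \<in> {e}" if "a \<in> G" for a
      using that unfolding G_def unit_group_def by auto
    then show ?thesis unfolding principal_hitting_mult[OF G G] using e by blast
  qed
  ultimately have "{e} \<in> up_mult X m (hitting_family X G) (principal_family X G)" by simp
  then obtain a where a: "a \<in> G" "\<forall>b\<in>G. m a b = e" unfolding hitting_principal_mult[OF G G] by blast
  have "a = m a e" using a(1) unfolding G_def unit_group_def by simp
  then have "a = e" using a(2) eG by simp
  moreover have "m e x = x" using x unfolding unit_group_def by blast
  ultimately show "x = e" using a(2) x unfolding G_def by simp
qed

text \<open>A regular element \<open>x = x s x\<close> has the inverse \<open>y = s x s\<close>: \<open>x y x = x\<close> and \<open>y x y = y\<close>.\<close>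

lemma regular_inverse:
  assumes S: "semigroup_on X m" and x: "x \<in> X" and s: "s \<in> X" "m (m x s) x = x"
  shows "\<exists>y\<in>X. m x (m y x) = x \<and> m y (m x y) = y"
proof (intro bexI conjI)
  note closed = semigroup_closed[OF S] and assoc = semigroup_assoc[OF S]
  have xsx: "m x (m s x) = x" using s x assoc by simp
  have absorb: "m x (m s (m x z)) = m x z" if z: "z \<in> X" for z
  proof -
    have "m x (m s (m x z)) = m x (m (m s x) z)" by (simp only: assoc[OF s(1) x z])
    also have "\<dots> = m (m x (m s x)) z" by (simp only: assoc[OF x closed[OF s(1) x] z])
    finally show ?thesis using xsx by simp
  qed
  show "m s (m x s) \<in> X" using closed s x by simp
  show "m x (m (m s (m x s)) x) = x" using closed assoc absorb s x xsx by simp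
  show "m (m s (m x s)) (m x (m s (m x s))) = m s (m x s)" using closed assoc absorb s x xsx by simp
qed

text \<open>When \<open>X X = X\<close>, the idempotent \<open>\<langle>X\<rangle>\<close> commutes with every \<open>\<langle>e\<rangle>\<close>, \<open>e\<close> idempotent,
  so the one-sided ideals \<open>X e\<close> and \<open>e X\<close> coincide.\<close>

lemma idempotent_ideals_coincide:
  assumes S: "semigroup_on X m" and IC: "idempotents_commute_on (upsilon X) (up_mult X m)"
    and XX: "set_mult m X X = X" and e: "e \<in> X" "m e e = e"
  shows "set_mult m X {e} = set_mult m {e} X"
proof -
  note closed = semigroup_closed[OF S]
  have X: "X \<subseteq> X" "X \<noteq> {}" and E: "{e} \<subseteq> X" "{e} \<noteq> {}" using e by auto
  have ee: "set_mult m {e} {e} = {e}" unfolding set_mult_def using e by auto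
  have "up_mult X m (principal_family X X) (principal_family X {e}) = up_mult X m (principal_family X {e}) (principal_family X X)"
    using idempotents_commuteD[OF IC principal_family_upsilon[OF X] principal_family_upsilon[OF E]
        principal_family_idempotent[OF X XX closed] principal_family_idempotent[OF E ee closed]] .
  then have "principal_family X (set_mult m X {e}) = principal_family X (set_mult m {e} X)"
    using principal_family_mult[OF X E closed] principal_family_mult[OF E X closed] by simp
  moreover have "set_mult m X {e} \<subseteq> X" "set_mult m {e} X \<subseteq> X"
    unfolding set_mult_def using closed e by auto
  ultimately show ?thesis using principal_family_inj by blast
qed

text \<open>A regular semigroup satisfies \<open>X X = X\<close>, so \<open>\<langle>X\<rangle>\<close> is an idempotent of \<open>\<upsilon>(X)\<close>.\<close>

lemma regular_square:
  assumes S: "semigroup_on X m" and R: "\<forall>x\<in>X. \<exists>s\<in>X. m (m x s) x = x"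
  shows "set_mult m X X = X"
proof
  note closed = semigroup_closed[OF S]
  show "set_mult m X X \<subseteq> X" unfolding set_mult_def using closed by blast
  show "X \<subseteq> set_mult m X X"
  proof
    fix u assume u: "u \<in> X"
    then obtain s where s: "s \<in> X" "m (m u s) u = u" using R by blast
    have "m (m u s) u \<in> set_mult m X X" unfolding set_mult_def using closed u s(1) by blast
    then show "u \<in> set_mult m X X" using s(2) by simp
  qed
qed

text \<open>Regular elements are idempotent: if \<open>y\<close> is an inverse of \<open>x\<close>, the idempotents \<open>x y\<close>
  and \<open>y x\<close> coincide, so \<open>x\<close> lies in a maximal subgroup, which is trivial.\<close>

lemma regular_base_band:
  assumes S: "semigroup_on X m" and IC: "idempotents_commute_on (upsilon X) (up_mult X m)"
    and R: "\<forall>x\<in>X. \<exists>s\<in>X. m (m x s) x = x" and x: "x \<in> X"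
  shows "m x x = x"
proof -
  note closed = semigroup_closed[OF S] and assoc = semigroup_assoc[OF S]
  have XX: "set_mult m X X = X" by (rule regular_square[OF S R])
  obtain y where y: "y \<in> X" "m x (m y x) = x" "m y (m x y) = y"
    using R x regular_inverse[OF S x] by blast
  define e where "e = m x y"
  define f where "f = m y x"
  have eX: "e \<in> X" and fX: "f \<in> X" using e_def f_def closed x y by auto
  have "m e e = m (m x (m y x)) y" unfolding e_def using x y(1) closed assoc by simp
  then have ee: "m e e = e" using y(2) e_def by simp
  have "m f f = m (m y (m x y)) x" unfolding f_def using x y(1) closed assoc by simp
  then have ff: "m f f = f" using y(3) f_def by simp
  have "m e x = m x (m y x)" unfolding e_def using x y(1) assoc by simp
  then have ex: "m e x = x" using y(2) by simp
  have "m f y = m y (m x y)" unfolding f_def using x y(1) assoc by simp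
  then have fy: "m f y = y" using y(3) by simp
  have xf: "m x f = x" and ye: "m y e = y" unfolding e_def f_def using y by simp_all
  have "m e x \<in> set_mult m {e} X" unfolding set_mult_def using x by blast
  then have "x \<in> set_mult m X {e}" using idempotent_ideals_coincide[OF S IC XX eX ee] ex by simp
  then obtain u where u: "u \<in> X" "x = m u e" unfolding set_mult_def by blast
  have "m x e = m u (m e e)" using u assoc eX by simp
  then have xe: "m x e = x" using u ee by simp
  have "m x f \<in> set_mult m X {f}" unfolding set_mult_def using x by blast
  then have "x \<in> set_mult m {f} X" using idempotent_ideals_coincide[OF S IC XX fX ff] xf by simp
  then obtain v where v: "v \<in> X" "x = m f v" unfolding set_mult_def by blast
  have "m f x = m (m f f) v" using v assoc fX by simp
  then have fx: "m f x = x" using v ff by simp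
  have "m f e = m (m f x) y" unfolding e_def using assoc fX x y(1) by simp
  then have "m f e = e" using fx e_def by simp
  moreover have "m f e = m y (m x e)" unfolding f_def using assoc eX x y(1) by simp
  ultimately have ef: "e = f" using xe f_def by simp
  have "x \<in> unit_group X m e"
    unfolding unit_group_def using x y(1) ex xe ye fy ef
    by (intro CollectI conjI bexI[of _ y]) (simp_all add: e_def f_def)
  then have "x = e" by (rule unit_group_trivial[OF S IC eX ee])
  then show ?thesis using ee by simp
qed

text \<open>Regularity of \<open>\<upsilon>(X)\<close> at a principal family: from \<open>\<langle>A\<rangle> \<S> \<langle>A\<rangle> = \<langle>A\<rangle>\<close>, every \<open>x \<in> A\<close>
  has some \<open>s \<in> X\<close> with \<open>x s A \<subseteq> A\<close>.\<close>

section \<open>Regularity of \<open>X\<close>\<close>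

lemma regular_principal_family:
  assumes R: "regular_on (upsilon X) (up_mult X m)" and A: "A \<subseteq> X" "A \<noteq> {}" and x: "x \<in> A"
  shows "\<exists>s\<in>X. \<forall>a\<in>A. m (m x s) a \<in> A"
proof -
  let ?F = "principal_family X A" and ?U = "{u\<in>X. \<forall>a\<in>A. m u a \<in> A}"
  have F: "?F \<in> upsilon X" by (rule principal_family_upsilon[OF A])
  obtain \<S> where S: "\<S> \<in> upsilon X" "up_mult X m (up_mult X m ?F \<S>) ?F = ?F"
    using R F unfolding regular_on_def by blast
  have "A \<in> up_mult X m (up_mult X m ?F \<S>) ?F" using S(2) A by (simp add: principal_family_iff)
  then have "{u\<in>X. {b\<in>X. m u b \<in> A} \<in> ?F} \<in> up_mult X m ?F \<S>"
    using up_mult_iff[OF up_mult_closed[OF F S(1)] F] by blast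
  moreover have "{u\<in>X. {b\<in>X. m u b \<in> A} \<in> ?F} = ?U"
    using principal_family_Collect[OF A(1)] by simp
  ultimately have "?U \<in> up_mult X m ?F \<S>" by simp
  then have "{a\<in>X. {s\<in>X. m a s \<in> ?U} \<in> \<S>} \<in> ?F"
    using up_mult_iff[OF F S(1)] by blast
  then have "{s\<in>X. m x s \<in> ?U} \<in> \<S>"
    using principal_family_Collect[OF A(1), of "\<lambda>a. {s\<in>X. m a s \<in> ?U} \<in> \<S>"] x by simp
  then have "{s\<in>X. m x s \<in> ?U} \<noteq> {}" using upsilon_nonempty[OF S(1)] by blast
  then show ?thesis by blast
qed

lemma regular_upsilon_base_regular:
  assumes R: "regular_on (upsilon X) (up_mult X m)" and x: "x \<in> X"
  shows "\<exists>s\<in>X. m (m x s) x = x"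
  using regular_principal_family[OF R, of "{x}" x] x by simp

section \<open>Upfamilies along sequences\<close>

text \<open>For a sequence \<open>s\<close> in \<open>X\<close> and a quantifier \<open>Q\<close> over index sets, \<open>seq_family X s Q\<close> collects
  the sets \<open>C\<close> with \<open>Q (\<lambda>k. s k \<in> C)\<close>; we use \<open>Q\<close> = ``eventually'' and ``frequently''.\<close>

definition seq_family :: "'a set \<Rightarrow> (nat \<Rightarrow> 'a) \<Rightarrow> ((nat \<Rightarrow> bool) \<Rightarrow> bool) \<Rightarrow> 'a set set" where
  "seq_family X s Q = {C. C \<subseteq> X \<and> Q (\<lambda>k. s k \<in> C)}"

lemma seq_family_upsilon:
  assumes empty: "\<not> Q (\<lambda>_. False)" and mono: "\<And>P P'. (\<And>k. P k \<Longrightarrow> P' k) \<Longrightarrow> Q P \<Longrightarrow> Q P'"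
  shows "seq_family X s Q \<in> upsilon X"
proof (rule upsilonI)
  show "seq_family X s Q \<subseteq> Pow X" unfolding seq_family_def by blast
  show "{} \<notin> seq_family X s Q" unfolding seq_family_def using empty by simp
  fix A E assume A: "A \<in> seq_family X s Q" and AE: "A \<subseteq> E" and EX: "E \<subseteq> X"
  have "Q (\<lambda>k. s k \<in> E)"
    by (rule mono[of "\<lambda>k. s k \<in> A"]) (use A AE in \<open>auto simp: seq_family_def\<close>)
  then show "E \<in> seq_family X s Q" unfolding seq_family_def using EX by blast
qed

lemma eventually_family_upsilon: "seq_family X s (\<lambda>P. eventually P sequentially) \<in> upsilon X"
  by (rule seq_family_upsilon) (simp, erule eventually_mono, blast)

lemma frequently_family_upsilon: "seq_family X s (\<lambda>P. frequently P sequentially) \<in> upsilon X"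
  by (rule seq_family_upsilon) (simp, erule frequently_elim1, blast)

lemma seq_family_mult:
  assumes sX: "\<And>k. s k \<in> X"
    and A: "seq_family X s Q1 \<in> upsilon X" and B: "seq_family X s Q2 \<in> upsilon X"
  shows "C \<in> up_mult X m (seq_family X s Q1) (seq_family X s Q2)
     \<longleftrightarrow> C \<subseteq> X \<and> Q1 (\<lambda>n. Q2 (\<lambda>k. m (s n) (s k) \<in> C))"
  unfolding up_mult_iff[OF A B] by (simp add: seq_family_def sX)

text \<open>For an injective sequence, ``containing a tail'' and ``containing infinitely many terms''
  are different conditions: the set of even-indexed terms separates them.\<close>

lemma eventually_family_ne_frequently_family:
  assumes inj: "inj s" and sX: "\<And>k. s k \<in> X"
  shows "seq_family X s (\<lambda>P. eventually P sequentially)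
     \<noteq> seq_family X s (\<lambda>P. frequently P sequentially)"
proof -
  define C where "C = s ` {k. even k}"
  have evens: "(\<lambda>k. s k \<in> C) = even" unfolding C_def using inj by (auto simp: inj_eq)
  have "frequently (\<lambda>k. even k) sequentially"
    unfolding frequently_sequentially
  proof
    fix N :: nat show "\<exists>n\<ge>N. even n" by (rule exI[of _ "2 * N"]) simp
  qed
  moreover have "\<not> eventually (\<lambda>k::nat. even k) sequentially"
    unfolding eventually_sequentially
  proof
    assume "\<exists>N. \<forall>n\<ge>N. even (n::nat)"
    then obtain N :: nat where N: "\<forall>n\<ge>N. even n" by blast
    have "2 * N + 1 \<ge> N" by simp
    then have "even (2 * N + 1)" using N by blast
    then show False by simp
  qed
  moreover have "C \<subseteq> X" unfolding C_def using sX by blast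
  ultimately have "C \<in> seq_family X s (\<lambda>P. frequently P sequentially)"
    and "C \<notin> seq_family X s (\<lambda>P. eventually P sequentially)"
    by (simp_all add: seq_family_def evens)
  then show ?thesis by blast
qed

text \<open>If left translation by each term \<open>s n\<close> does not affect the quantifier \<open>Q2\<close> applied to the
  sequence, the sequence families multiply like a right-zero semigroup \<open>(F G = G)\<close>; if it makes
  \<open>Q2\<close> test only the single term \<open>s n\<close>, they multiply like a left-zero semigroup \<open>(F G = F)\<close>.\<close>

lemma seq_family_mult_right_zero:
  assumes sX: "\<And>k. s k \<in> X"
    and A: "seq_family X s Q1 \<in> upsilon X" and B: "seq_family X s Q2 \<in> upsilon X"
    and const: "\<And>P. Q1 (\<lambda>_. P) \<longleftrightarrow> P"
    and row: "\<And>n C. C \<subseteq> X \<Longrightarrow> Q2 (\<lambda>k. m (s n) (s k) \<in> C) \<longleftrightarrow> Q2 (\<lambda>k. s k \<in> C)"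
  shows "up_mult X m (seq_family X s Q1) (seq_family X s Q2) = seq_family X s Q2"
proof (rule set_eqI)
  fix C show "C \<in> up_mult X m (seq_family X s Q1) (seq_family X s Q2) \<longleftrightarrow> C \<in> seq_family X s Q2"
    unfolding seq_family_mult[OF sX A B] using row const by (auto simp: seq_family_def)
qed

lemma seq_family_mult_left_zero:
  assumes sX: "\<And>k. s k \<in> X"
    and A: "seq_family X s Q1 \<in> upsilon X" and B: "seq_family X s Q2 \<in> upsilon X"
    and row: "\<And>n C. C \<subseteq> X \<Longrightarrow> Q2 (\<lambda>k. m (s n) (s k) \<in> C) \<longleftrightarrow> s n \<in> C"
  shows "up_mult X m (seq_family X s Q1) (seq_family X s Q2) = seq_family X s Q1"
proof (rule set_eqI)
  fix C show "C \<in> up_mult X m (seq_family X s Q1) (seq_family X s Q2) \<longleftrightarrow> C \<in> seq_family X s Q1"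
    unfolding seq_family_mult[OF sX A B] using row by (auto simp: seq_family_def)
qed

lemma translated_tail:
  assumes "\<forall>\<^sub>F k in sequentially. f k = s (k + c)"
  shows "eventually (\<lambda>k. f k \<in> C) sequentially \<longleftrightarrow> eventually (\<lambda>k. s k \<in> C) sequentially"
    and "frequently (\<lambda>k. f k \<in> C) sequentially \<longleftrightarrow> frequently (\<lambda>k. s k \<in> C) sequentially"
proof -
  have "eventually (\<lambda>k. f k \<in> C) sequentially \<longleftrightarrow> eventually (\<lambda>k. s (k + c) \<in> C) sequentially"
    by (rule eventually_cong[OF assms]) simp
  also have "\<dots> \<longleftrightarrow> eventually (\<lambda>k. s k \<in> C) sequentially"
    by (rule eventually_sequentially_seg[of "\<lambda>k. s k \<in> C" c])
  finally show "eventually (\<lambda>k. f k \<in> C) sequentially \<longleftrightarrow> eventually (\<lambda>k. s k \<in> C) sequentially" .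
  have "frequently (\<lambda>k. f k \<in> C) sequentially \<longleftrightarrow> frequently (\<lambda>k. s (k + c) \<in> C) sequentially"
    by (rule frequently_cong[OF assms]) simp
  also have "\<dots> \<longleftrightarrow> frequently (\<lambda>k. s k \<in> C) sequentially"
    unfolding frequently_def by (subst eventually_sequentially_seg[of "\<lambda>k. s k \<notin> C" c]) (rule refl)
  finally show "frequently (\<lambda>k. f k \<in> C) sequentially \<longleftrightarrow> frequently (\<lambda>k. s k \<in> C) sequentially" .
qed

text \<open>An injective sequence on which left translations act, on tails, as shifts produces a
  right-zero pair of distinct idempotents of \<open>\<upsilon>(X)\<close>; so idempotents cannot commute.\<close>

lemma shift_sequence_not_IC:
  assumes inj: "inj s" and sX: "\<And>k. s k \<in> X"
    and shift: "\<And>n. \<exists>c. \<forall>\<^sub>F k in sequentially. m (s n) (s k) = s (k + c)"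
  shows "\<not> idempotents_commute_on (upsilon X) (up_mult X m)"
proof
  assume IC: "idempotents_commute_on (upsilon X) (up_mult X m)"
  define F where "F = seq_family X s (\<lambda>P. eventually P sequentially)"
  define G where "G = seq_family X s (\<lambda>P. frequently P sequentially)"
  have FU: "F \<in> upsilon X" and GU: "G \<in> upsilon X"
    unfolding F_def G_def by (rule eventually_family_upsilon frequently_family_upsilon)+
  have "eventually (\<lambda>k. m (s n) (s k) \<in> C) sequentially \<longleftrightarrow> eventually (\<lambda>k. s k \<in> C) sequentially"
    and "frequently (\<lambda>k. m (s n) (s k) \<in> C) sequentially \<longleftrightarrow> frequently (\<lambda>k. s k \<in> C) sequentially"
    for n C using shift[of n] translated_tail[of "\<lambda>k. m (s n) (s k)" s] by auto
  then have "up_mult X m F F = F" "up_mult X m G G = G" "up_mult X m F G = G" "up_mult X m G F = F"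
    unfolding F_def G_def
    by (simp_all add: seq_family_mult_right_zero[OF sX] eventually_family_upsilon frequently_family_upsilon)
  then have "F = G" using idempotents_commuteD[OF IC FU GU] by simp
  then show False using eventually_family_ne_frequently_family[OF inj sX] unfolding F_def G_def by blast
qed

text \<open>Dually, if the \<open>n\<close>-th row \<open>k \<mapsto> s n s k\<close> is eventually constant \<open>s n\<close>, the two families form a
  left-zero pair of distinct idempotents.\<close>

lemma threshold_sequence_not_IC:
  assumes inj: "inj s" and sX: "\<And>k. s k \<in> X"
    and threshold: "\<And>n. \<forall>\<^sub>F k in sequentially. m (s n) (s k) = s n"
  shows "\<not> idempotents_commute_on (upsilon X) (up_mult X m)"
proof
  assume IC: "idempotents_commute_on (upsilon X) (up_mult X m)"
  define F where "F = seq_family X s (\<lambda>P. eventually P sequentially)"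
  define G where "G = seq_family X s (\<lambda>P. frequently P sequentially)"
  have FU: "F \<in> upsilon X" and GU: "G \<in> upsilon X"
    unfolding F_def G_def by (rule eventually_family_upsilon frequently_family_upsilon)+
  have "eventually (\<lambda>k. m (s n) (s k) \<in> C) sequentially \<longleftrightarrow> s n \<in> C"
    and "frequently (\<lambda>k. m (s n) (s k) \<in> C) sequentially \<longleftrightarrow> s n \<in> C"
    for n C using eventually_cong[OF threshold[of n]] frequently_cong[OF threshold[of n]] by simp_all
  then have "up_mult X m F F = F" "up_mult X m G G = G" "up_mult X m F G = F" "up_mult X m G F = G"
    unfolding F_def G_def
    by (simp_all add: seq_family_mult_left_zero[OF sX] eventually_family_upsilon frequently_family_upsilon)
  then have "F = G" using idempotents_commuteD[OF IC FU GU] by simp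
  then show False using eventually_family_ne_frequently_family[OF inj sX] unfolding F_def G_def by blast
qed

section \<open>Sub-Clifford \<open>\<upsilon>(X)\<close>: regularity of \<open>X\<close>\<close>

text \<open>Powers \<open>spow m x n = x\<^sup>n\<^sup>+\<^sup>1\<close> in a semigroup (there need not be a unit).\<close>

primrec spow :: "('a \<Rightarrow> 'a \<Rightarrow> 'a) \<Rightarrow> 'a \<Rightarrow> nat \<Rightarrow> 'a" where
  "spow m x 0 = x"
| "spow m x (Suc n) = m x (spow m x n)"

lemma spow_closed: "semigroup_on X m \<Longrightarrow> x \<in> X \<Longrightarrow> spow m x n \<in> X"
  by (induction n) (auto simp: semigroup_closed)

lemma spow_mult:
  assumes S: "semigroup_on X m" and x: "x \<in> X"
  shows "m (spow m x i) (spow m x j) = spow m x (Suc (i + j))"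
proof (induction i)
  case (Suc i)
  have "m (spow m x (Suc i)) (spow m x j) = m x (m (spow m x i) (spow m x j))"
    using semigroup_assoc[OF S] x spow_closed[OF S x] by simp
  then show ?case using Suc by simp
qed simp

lemma spow_periodic: "spow m x d = x \<Longrightarrow> spow m x (d + t) = spow m x t"
  by (induction t) simp_all

text \<open>The powers of an element are not all distinct: left translation by \<open>x\<^sup>n\<^sup>+\<^sup>1\<close> shifts the
  sequence of powers.\<close>

lemma powers_not_injective:
  assumes S: "semigroup_on X m" and IC: "idempotents_commute_on (upsilon X) (up_mult X m)"
    and x: "x \<in> X"
  shows "\<not> inj (spow m x)"
proof
  assume inj: "inj (spow m x)"
  have "\<forall>\<^sub>F k in sequentially. m (spow m x n) (spow m x k) = spow m x (k + Suc n)" for n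
    using spow_mult[OF S x] by (simp add: add.commute)
  then have "\<not> idempotents_commute_on (upsilon X) (up_mult X m)"
    by (intro shift_sequence_not_IC[OF inj spow_closed[OF S x]]) blast
  then show False using IC by contradiction
qed

text \<open>In a sub-Clifford \<open>\<upsilon>(X)\<close> the principal families of the powers of \<open>x\<close> lie in a cancellative
  subsemigroup, so a coincidence \<open>x\<^sup>i\<^sup>+\<^sup>1 = x\<^sup>i\<^sup>+\<^sup>d\<^sup>+\<^sup>1\<close> can be cancelled down to \<open>x = x\<^sup>d\<^sup>+\<^sup>1\<close>,
  which makes \<open>x\<close> regular.\<close>

lemma sub_clifford_base_regular:
  assumes S: "semigroup_on X m" and IC: "idempotents_commute_on (upsilon X) (up_mult X m)"
    and SC: "sub_clifford_on (upsilon X) (up_mult X m)" and x: "x \<in> X"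
  shows "\<exists>s\<in>X. m (m x s) x = x"
proof -
  note closed = semigroup_closed[OF S]
  let ?p = "spow m x" and ?P = "\<lambda>k. principal_family X {spow m x k}"
  have pX: "?p k \<in> X" for k using spow_closed[OF S x] .
  have "?P 0 \<in> upsilon X" using principal_family_upsilon[of "{x}" X] x by simp
  then have "\<exists>T. T \<subseteq> upsilon X \<and> ?P 0 \<in> T \<and> (\<forall>a\<in>T. \<forall>b\<in>T. up_mult X m a b \<in> T)
      \<and> cancellative_on T (up_mult X m)"
    by (rule bspec[OF SC[unfolded sub_clifford_on_def]])
  then obtain T where T: "T \<subseteq> upsilon X" "?P 0 \<in> T" "\<forall>a\<in>T. \<forall>b\<in>T. up_mult X m a b \<in> T"
      "cancellative_on T (up_mult X m)"
    by (elim exE conjE) (rule that)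
  have PSuc: "?P (Suc k) = up_mult X m (?P 0) (?P k)" for k
    using principal_family_singleton_mult[OF x pX closed] by simp
  have PT: "?P k \<in> T" for k by (induction k) (use T PSuc in auto)
  have cancel: "?p 0 = ?p d" if "?p i = ?p (i + d)" for i d
    using that
  proof (induction i)
    case (Suc i)
    have "up_mult X m (?P 0) (?P i) = up_mult X m (?P 0) (?P (i + d))"
      using PSuc[of i] PSuc[of "i + d"] Suc.prems by simp
    then have "?P i = ?P (i + d)"
      using T(4) T(2) PT[of i] PT[of "i + d"] unfolding cancellative_on_def by blast
    then have "?p i = ?p (i + d)" using principal_family_inj[of "{?p i}" X "{?p (i + d)}"] pX by simp
    then show ?case by (rule Suc.IH)
  qed simp
  obtain i j where ij: "i \<noteq> j" "?p i = ?p j"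
    using powers_not_injective[OF S IC x] unfolding inj_def by auto
  obtain i d where id: "?p i = ?p (i + d)" "d \<noteq> 0"
  proof (cases "i < j")
    case True
    with ij show ?thesis by (intro that[of i "j - i"]) simp_all
  next
    case False
    with ij show ?thesis by (intro that[of j "i - j"]) simp_all
  qed
  have d: "?p d = x" using cancel[OF id(1)] by simp
  obtain e where e: "d = Suc e" using id(2) not0_implies_Suc by blast
  have "m (m x (?p (e + e))) x = ?p (d + d)"
    using spow_mult[OF S x, of "Suc (e + e)" 0] e by simp
  also have "\<dots> = x" using spow_periodic[OF d, of d] d by simp
  finally show ?thesis using pX by blast
qed

section \<open>Linearity of \<open>X\<close>\<close>

lemma semilattice_pair_products:
  assumes L: "semilattice_on X m" and x: "x \<in> X" and y: "y \<in> X"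
  shows "set_mult m {x, y} {x, y} = {x, y, m x y}"
    and "set_mult m {x, y} {x, y, m x y} = {x, y, m x y}"
proof -
  note S = semilattice_semigroup[OF L]
  have xx: "m x x = x" and yy: "m y y = y" and yx: "m y x = m x y"
    using x y semilattice_idem[OF L] semilattice_comm[OF L] by auto
  have xz: "m x (m x y) = m x y" and yz: "m y (m x y) = m x y"
    using x y xx yy yx semigroup_assoc[OF S] by metis+
  show "set_mult m {x, y} {x, y} = {x, y, m x y}"
    unfolding set_mult_def using xx yy yx by (auto; metis)
  show "set_mult m {x, y} {x, y, m x y} = {x, y, m x y}"
    unfolding set_mult_def using xx yy yx xz yz by (auto; metis)
qed

text \<open>A semilattice \<open>X\<close> is linear if \<open>\<upsilon>(X)\<close> is sub-Clifford: cancelling \<open>\<langle>{x, y}\<rangle>\<close> in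
  \<open>\<langle>{x, y}\<rangle>\<^sup>2 = \<langle>{x, y}\<rangle>\<^sup>3\<close> gives \<open>{x, y} = {x, y, x y}\<close>.\<close>

lemma sub_clifford_base_linear:
  assumes L: "semilattice_on X m" and SC: "sub_clifford_on (upsilon X) (up_mult X m)"
  shows "linear_on X m"
  unfolding linear_on_def
proof (intro ballI)
  fix x y assume x: "x \<in> X" and y: "y \<in> X"
  note closed = semigroup_closed[OF semilattice_semigroup[OF L]]
  let ?A = "{x, y}" and ?B = "{x, y, m x y}"
  have A: "?A \<subseteq> X" "?A \<noteq> {}" and B: "?B \<subseteq> X" "?B \<noteq> {}" using x y closed by auto
  have "principal_family X ?A \<in> upsilon X" by (rule principal_family_upsilon[OF A])
  then have "\<exists>T. T \<subseteq> upsilon X \<and> principal_family X ?A \<in> T \<and> (\<forall>a\<in>T. \<forall>b\<in>T. up_mult X m a b \<in> T)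
      \<and> cancellative_on T (up_mult X m)"
    by (rule bspec[OF SC[unfolded sub_clifford_on_def]])
  then obtain T where T: "principal_family X ?A \<in> T" "\<forall>a\<in>T. \<forall>b\<in>T. up_mult X m a b \<in> T"
      "cancellative_on T (up_mult X m)"
    by (elim exE conjE) (rule that)
  have sq: "up_mult X m (principal_family X ?A) (principal_family X ?A) = principal_family X ?B"
    using principal_family_mult[OF A A closed] semilattice_pair_products(1)[OF L x y] by simp
  have cube: "up_mult X m (principal_family X ?A) (principal_family X ?B) = principal_family X ?B"
    using principal_family_mult[OF A B closed] semilattice_pair_products(2)[OF L x y] by simp
  have "principal_family X ?B \<in> T" using T(1,2) sq by metis
  then have "principal_family X ?A = principal_family X ?B"
    using T(3) T(1) sq cube unfolding cancellative_on_def by metis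
  then have "?A = ?B" using principal_family_inj[OF A(1) B(1)] by blast
  then show "m x y \<in> {x, y}" by auto
qed

text \<open>A semilattice \<open>X\<close> is linear if \<open>\<upsilon>(X)\<close> is regular: regularity at \<open>\<langle>{x, y}\<rangle>\<close> gives \<open>s\<close> with
  \<open>x s y \<in> {x, y}\<close>, and \<open>x s y\<close> lies below both \<open>x\<close> and \<open>y\<close>.\<close>

lemma regular_upsilon_base_linear:
  assumes L: "semilattice_on X m" and R: "regular_on (upsilon X) (up_mult X m)"
  shows "linear_on X m"
  unfolding linear_on_def
proof (intro ballI)
  fix x y assume x: "x \<in> X" and y: "y \<in> X"
  note S = semilattice_semigroup[OF L]
  note closed = semigroup_closed[OF S] and assoc = semigroup_assoc[OF S]
  let ?A = "{x, y}"
  have "\<exists>s\<in>X. \<forall>a\<in>?A. m (m x s) a \<in> ?A" using regular_principal_family[OF R, of ?A x] x y by simp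
  then obtain s where s: "s \<in> X" and w: "m (m x s) y \<in> ?A" by blast
  define w where "w = m (m x s) y"
  have "m x w = m (m x x) (m s y)" unfolding w_def using x y s closed assoc by simp
  then have xw: "m x w = w" unfolding w_def using x y s assoc semilattice_idem[OF L] by simp
  have "m y w = m (m x s) (m y y)" unfolding w_def using x y s closed assoc semilattice_comm[OF L] by metis
  then have yw: "m y w = w" unfolding w_def using x y s assoc semilattice_idem[OF L] by simp
  show "m x y \<in> {x, y}"
  proof (cases "w = x")
    case True
    then show ?thesis using yw semilattice_comm[OF L x y] by simp
  next
    case False
    then have "w = y" using w w_def by simp
    then show ?thesis using xw by simp
  qed
qed

section \<open>Finiteness of \<open>X\<close>\<close>

definition below :: "('a \<Rightarrow> 'a \<Rightarrow> 'a) \<Rightarrow> 'a \<Rightarrow> 'a \<Rightarrow> bool" where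
  "below m a b \<longleftrightarrow> m a b = a"

lemma below_refl: "semilattice_on X m \<Longrightarrow> a \<in> X \<Longrightarrow> below m a a"
  unfolding below_def by (rule semilattice_idem)

lemma below_trans:
  "semigroup_on X m \<Longrightarrow> a \<in> X \<Longrightarrow> b \<in> X \<Longrightarrow> c \<in> X \<Longrightarrow> below m a b \<Longrightarrow> below m b c \<Longrightarrow> below m a c"
  unfolding below_def by (metis semigroup_assoc)

lemma below_antisym:
  "semilattice_on X m \<Longrightarrow> a \<in> X \<Longrightarrow> b \<in> X \<Longrightarrow> below m a b \<Longrightarrow> below m b a \<Longrightarrow> a = b"
  unfolding below_def by (metis semilattice_comm)

lemma below_total:
  "semilattice_on X m \<Longrightarrow> linear_on X m \<Longrightarrow> a \<in> X \<Longrightarrow> b \<in> X \<Longrightarrow> below m a b \<or> below m b a"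
  unfolding below_def by (metis linear_onD semilattice_comm)

lemma finite_least:
  assumes trans: "\<And>a b c. a \<in> X \<Longrightarrow> b \<in> X \<Longrightarrow> c \<in> X \<Longrightarrow> R a b \<Longrightarrow> R b c \<Longrightarrow> R a c"
    and total: "\<And>a b. a \<in> X \<Longrightarrow> b \<in> X \<Longrightarrow> R a b \<or> R b a"
  shows "finite Y \<Longrightarrow> Y \<noteq> {} \<Longrightarrow> Y \<subseteq> X \<Longrightarrow> \<exists>a\<in>Y. \<forall>b\<in>Y. R a b"
proof (induction Y rule: finite_ne_induct)
  case (singleton x)
  then show ?case using total[of x x] by auto
next
  case (insert x F)
  then obtain a where a: "a \<in> F" "\<forall>b\<in>F. R a b" by auto
  show ?case
  proof (cases "R x a")
    case True
    then have "\<forall>b\<in>F. R x b" using a trans insert.prems by blast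
    then show ?thesis using total[of x x] insert.prems by auto
  next
    case False
    then have "R a x" using total[of x a] a insert.prems by auto
    then show ?thesis using a by auto
  qed
qed

lemma finite_below_least:
  assumes L: "semilattice_on X m" and Lin: "linear_on X m"
    and "finite Y" "Y \<noteq> {}" "Y \<subseteq> X"
  shows "\<exists>a\<in>Y. \<forall>b\<in>Y. below m a b"
proof (rule finite_least[where R="below m" and X=X])
  show "below m a c" if "a \<in> X" "b \<in> X" "c \<in> X" "below m a b" "below m b c" for a b c
    using below_trans[OF semilattice_semigroup[OF L]] that by blast
qed (use below_total[OF L Lin] assms in auto)

lemma finite_below_greatest:
  assumes L: "semilattice_on X m" and Lin: "linear_on X m"
    and "finite Y" "Y \<noteq> {}" "Y \<subseteq> X"
  shows "\<exists>a\<in>Y. \<forall>b\<in>Y. below m b a"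
proof (rule finite_least[where R="\<lambda>a b. below m b a" and X=X])
  show "below m c a" if "a \<in> X" "b \<in> X" "c \<in> X" "below m b a" "below m c b" for a b c
    using below_trans[OF semilattice_semigroup[OF L]] that by blast
qed (use below_total[OF L Lin] assms in auto)

lemma stepping_sequence:
  assumes "y0 \<in> Y" and step: "\<forall>y\<in>Y. \<exists>y'\<in>Y. R y y' \<and> y \<noteq> y'"
  shows "\<exists>s. \<forall>n. s n \<in> Y \<and> R (s n) (s (Suc n)) \<and> s n \<noteq> s (Suc n)"
  using dependent_nat_choice[of "\<lambda>_ y. y \<in> Y" "\<lambda>_ y y'. R y y' \<and> y \<noteq> y'"] assms by blast

lemma stepping_sequence_mono:
  assumes trans: "\<And>a b c. a \<in> X \<Longrightarrow> b \<in> X \<Longrightarrow> c \<in> X \<Longrightarrow> R a b \<Longrightarrow> R b c \<Longrightarrow> R a c"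
    and refl: "\<And>a. a \<in> X \<Longrightarrow> R a a"
    and sX: "\<And>n. s n \<in> X" and succ: "\<And>n. R (s n) (s (Suc n))"
  shows "n \<le> k \<Longrightarrow> R (s n) (s k)"
proof (induction k rule: dec_induct)
  case base
  then show ?case using refl sX by blast
next
  case (step k)
  then show ?case using trans[OF sX sX sX] succ by blast
qed

lemma stepping_sequence_inj:
  assumes trans: "\<And>a b c. a \<in> X \<Longrightarrow> b \<in> X \<Longrightarrow> c \<in> X \<Longrightarrow> R a b \<Longrightarrow> R b c \<Longrightarrow> R a c"
    and refl: "\<And>a. a \<in> X \<Longrightarrow> R a a"
    and antisym: "\<And>a b. a \<in> X \<Longrightarrow> b \<in> X \<Longrightarrow> R a b \<Longrightarrow> R b a \<Longrightarrow> a = b"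
    and sX: "\<And>n. s n \<in> X" and step: "\<And>n. R (s n) (s (Suc n)) \<and> s n \<noteq> s (Suc n)"
  shows "inj s"
proof -
  have succ: "R (s n) (s (Suc n))" for n using step by blast
  note mono = stepping_sequence_mono[of X R s, OF trans refl sX succ]
  have "s i \<noteq> s j" if "i < j" for i j
  proof
    assume eq: "s i = s j"
    have "R (s (Suc i)) (s j)" using mono step that by (simp add: Suc_leI)
    then have "R (s (Suc i)) (s i)" using eq by simp
    then show False using antisym[OF sX sX] step by metis
  qed
  then show ?thesis by (metis injI nat_neq_iff)
qed

text \<open>An infinite linear order always has a nonempty subset without least or without greatest
  element: otherwise take the greatest \<open>c\<close> among the points with infinitely many points above;
  the least point strictly above \<open>c\<close> would again have infinitely many points above.\<close>

lemma bounded_subsets_finite: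
  assumes L: "semilattice_on X m" and Lin: "linear_on X m"
    and least: "\<And>Y. Y \<subseteq> X \<Longrightarrow> Y \<noteq> {} \<Longrightarrow> \<exists>a\<in>Y. \<forall>b\<in>Y. below m a b"
    and greatest: "\<And>Y. Y \<subseteq> X \<Longrightarrow> Y \<noteq> {} \<Longrightarrow> \<exists>a\<in>Y. \<forall>b\<in>Y. below m b a"
  shows "finite X"
proof (rule ccontr)
  assume inf: "infinite X"
  define up where "up a = {b\<in>X. below m a b}" for a
  define A where "A = {a\<in>X. infinite (up a)}"
  obtain a0 where a0: "a0 \<in> X" "\<forall>b\<in>X. below m a0 b" using least[of X] inf by auto
  then have "up a0 = X" unfolding up_def by blast
  then have "a0 \<in> A" unfolding A_def using a0 inf by simp
  then obtain c where c: "c \<in> A" "\<forall>b\<in>A. below m b c" using greatest[of A] unfolding A_def by blast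
  define U where "U = up c - {c}"
  have U: "infinite U" "U \<subseteq> X" using c unfolding U_def A_def up_def by auto
  then obtain d where d: "d \<in> U" "\<forall>b\<in>U. below m d b" using least[of U] by auto
  have "U \<subseteq> up d" using d U unfolding up_def by blast
  then have "d \<in> A" using U d finite_subset unfolding A_def by blast
  then have "below m d c" using c by blast
  moreover have "below m c d" "d \<noteq> c" "c \<in> X" "d \<in> X" using d c unfolding U_def up_def A_def by auto
  ultimately show False using below_antisym[OF L] by blast
qed

text \<open>In a linear semilattice whose upfamily semigroup has commuting idempotents every nonempty
  subset has a least element: otherwise it contains a strictly descending sequence, whose rows
  \<open>k \<mapsto> s n s k\<close> eventually equal the sequence itself.\<close>

lemma IC_linear_semilattice_least:
  assumes L: "semilattice_on X m" and Lin: "linear_on X m"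
    and IC: "idempotents_commute_on (upsilon X) (up_mult X m)"
    and Y: "Y \<subseteq> X" "Y \<noteq> {}"
  shows "\<exists>a\<in>Y. \<forall>b\<in>Y. below m a b"
proof (rule ccontr)
  note refl = below_refl[OF L] and antisym = below_antisym[OF L] and total = below_total[OF L Lin]
  have trans': "below m c a" if "a \<in> X" "b \<in> X" "c \<in> X" "below m b a" "below m c b" for a b c
    using below_trans[OF semilattice_semigroup[OF L]] that by blast
  have antisym': "a = b" if "a \<in> X" "b \<in> X" "below m b a" "below m a b" for a b
    using antisym that by blast
  assume "\<not> (\<exists>a\<in>Y. \<forall>b\<in>Y. below m a b)"
  then have "\<forall>y\<in>Y. \<exists>y'\<in>Y. below m y' y \<and> y \<noteq> y'" using Y total refl by blast
  then obtain s where s: "\<And>n. s n \<in> Y \<and> below m (s (Suc n)) (s n) \<and> s n \<noteq> s (Suc n)"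
    using stepping_sequence[of _ Y "\<lambda>a b. below m b a"] Y by blast
  have sX: "s n \<in> X" for n using s Y by blast
  have step: "below m (s (Suc n)) (s n) \<and> s n \<noteq> s (Suc n)" for n using s by blast
  have succ: "below m (s (Suc n)) (s n)" for n using step by blast
  have inj: "inj s" by (rule stepping_sequence_inj[of X "\<lambda>a b. below m b a" s, OF trans' refl antisym' sX step])
  have "m (s n) (s k) = s k" if "n \<le> k" for n k
  proof -
    have "below m (s k) (s n)"
      using stepping_sequence_mono[where R="\<lambda>a b. below m b a" and s=s and X=X, OF trans' refl sX succ that] .
    then show ?thesis using semilattice_comm[OF L sX[of n] sX[of k]] unfolding below_def by simp
  qed
  then have "\<forall>\<^sub>F k in sequentially. m (s n) (s k) = s (k + 0)" for n
    unfolding eventually_sequentially by auto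
  then have "\<not> idempotents_commute_on (upsilon X) (up_mult X m)"
    by (intro shift_sequence_not_IC[OF inj sX]) blast
  then show False using IC by contradiction
qed

text \<open>Dually every nonempty subset has a greatest element: otherwise it contains a strictly
  ascending sequence, whose rows are eventually constant.\<close>

lemma IC_linear_semilattice_greatest:
  assumes L: "semilattice_on X m" and Lin: "linear_on X m"
    and IC: "idempotents_commute_on (upsilon X) (up_mult X m)"
    and Y: "Y \<subseteq> X" "Y \<noteq> {}"
  shows "\<exists>a\<in>Y. \<forall>b\<in>Y. below m b a"
proof (rule ccontr)
  note refl = below_refl[OF L] and trans = below_trans[OF semilattice_semigroup[OF L]]
    and antisym = below_antisym[OF L] and total = below_total[OF L Lin]
  assume "\<not> (\<exists>a\<in>Y. \<forall>b\<in>Y. below m b a)"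
  then have "\<forall>y\<in>Y. \<exists>y'\<in>Y. below m y y' \<and> y \<noteq> y'" using Y total refl by blast
  then obtain s where s: "\<And>n. s n \<in> Y \<and> below m (s n) (s (Suc n)) \<and> s n \<noteq> s (Suc n)"
    using stepping_sequence[of _ Y "below m"] Y by blast
  have sX: "s n \<in> X" for n using s Y by blast
  have step: "below m (s n) (s (Suc n)) \<and> s n \<noteq> s (Suc n)" for n using s by blast
  have succ: "below m (s n) (s (Suc n))" for n using step by blast
  have inj: "inj s" by (rule stepping_sequence_inj[of X "below m" s, OF trans refl antisym sX step])
  have "m (s n) (s k) = s n" if "n \<le> k" for n k
    using stepping_sequence_mono[where R="below m" and s=s and X=X, OF trans refl sX succ that]
    unfolding below_def .
  then have "\<forall>\<^sub>F k in sequentially. m (s n) (s k) = s n" for n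
    unfolding eventually_sequentially by auto
  then have "\<not> idempotents_commute_on (upsilon X) (up_mult X m)"
    by (rule threshold_sequence_not_IC[OF inj sX])
  then show False using IC by contradiction
qed

lemma IC_linear_semilattice_finite:
  assumes L: "semilattice_on X m" and Lin: "linear_on X m"
    and IC: "idempotents_commute_on (upsilon X) (up_mult X m)"
  shows "finite X"
  using bounded_subsets_finite[OF L Lin] IC_linear_semilattice_least[OF L Lin IC]
    IC_linear_semilattice_greatest[OF L Lin IC] by blast

section \<open>Finite linear semilattices: (4) \<Longrightarrow> (1)\<close>

text \<open>For linear \<open>X\<close> every upfamily is idempotent: if \<open>a \<notin> C\<close> then \<open>a b \<in> C\<close> forces \<open>a b = b\<close>.\<close>

lemma linear_upsilon_idempotent:
  assumes Lin: "linear_on X m" and A: "\<A> \<in> upsilon X"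
  shows "up_mult X m \<A> \<A> = \<A>"
proof (rule set_eqI)
  fix C
  let ?D = "{a\<in>X. {b\<in>X. m a b \<in> C} \<in> \<A>}"
  show "C \<in> up_mult X m \<A> \<A> \<longleftrightarrow> C \<in> \<A>"
  proof
    assume "C \<in> up_mult X m \<A> \<A>"
    then have CX: "C \<subseteq> X" and D: "?D \<in> \<A>" using up_mult_iff[OF A A] by auto
    show "C \<in> \<A>"
    proof (cases "?D \<subseteq> C")
      case True
      then show ?thesis using upsilon_up[OF A D _ CX] by blast
    next
      case False
      then obtain a where a: "a \<in> X" "{b\<in>X. m a b \<in> C} \<in> \<A>" "a \<notin> C" by blast
      have "{b\<in>X. m a b \<in> C} \<subseteq> C" using linear_onD[OF Lin a(1)] a(3) by force
      then show ?thesis using upsilon_up[OF A a(2) _ CX] by blast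
    qed
  next
    assume C: "C \<in> \<A>"
    have CX: "C \<subseteq> X" using upsilon_subset[OF A C] .
    have "{b\<in>X. m a b \<in> C} \<in> \<A>" if a: "a \<in> C" for a
    proof -
      have "C \<subseteq> {b\<in>X. m a b \<in> C}" using linear_onD[OF Lin] a CX by fastforce
      then show ?thesis using upsilon_up[OF A C] by blast
    qed
    then have "?D \<in> \<A>" using upsilon_up[OF A C, of ?D] CX by blast
    then show "C \<in> up_mult X m \<A> \<A>" using up_mult_iff[OF A A] CX by blast
  qed
qed

lemma up_mult_memI:
  assumes A: "\<A> \<in> upsilon X" and B: "\<B> \<in> upsilon X" and CX: "C \<subseteq> X"
    and A0: "A0 \<in> \<A>" and B0: "B0 \<in> \<B>" and AB: "\<forall>a\<in>A0. \<forall>b\<in>B0. m a b \<in> C"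
  shows "C \<in> up_mult X m \<A> \<B>"
proof -
  have "{b\<in>X. m a b \<in> C} \<in> \<B>" if "a \<in> A0" for a
  proof -
    have "B0 \<subseteq> {b\<in>X. m a b \<in> C}" using AB that upsilon_subset[OF B B0] by blast
    then show ?thesis using upsilon_up[OF B B0, of "{b\<in>X. m a b \<in> C}"] by blast
  qed
  then have "A0 \<subseteq> {a\<in>X. {b\<in>X. m a b \<in> C} \<in> \<B>}" using upsilon_subset[OF A A0] by blast
  then show ?thesis using up_mult_iff[OF A B] upsilon_up[OF A A0] CX by blast
qed

lemma linear_mult_eq:
  assumes L: "semilattice_on X m" and Lin: "linear_on X m" and a: "a \<in> X" and b: "b \<in> X"
  shows "m a b = (if below m a b then a else b)" and "\<not> below m a b \<Longrightarrow> below m b a \<and> a \<noteq> b"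
proof -
  have "m a b = a \<or> m a b = b" "m b a = m a b" using linear_onD[OF Lin a b] semilattice_comm[OF L a b] by auto
  then show "m a b = (if below m a b then a else b)" and "\<not> below m a b \<Longrightarrow> below m b a \<and> a \<noteq> b"
    unfolding below_def by auto
qed

text \<open>Key elements for products in a finite linear semilattice: every nonempty \<open>D \<subseteq> X\<close> contains
  \<open>a\<^sub>0\<close> with \<open>a\<^sub>0 b \<in> C \<Longrightarrow> a b \<in> C\<close> for all \<open>a \<in> D\<close>: the greatest element of \<open>D\<close> if
  \<open>D \<subseteq> C\<close>, and the least element of \<open>D - C\<close> otherwise.\<close>

lemma chain_key_element_inside:
  assumes L: "semilattice_on X m" and Lin: "linear_on X m"
    and a0: "a0 \<in> X" "\<forall>a\<in>D. below m a a0" and DC: "D \<subseteq> C"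
    and a: "a \<in> D" "a \<in> X" and b: "b \<in> X" and a0b: "m a0 b \<in> C"
  shows "m a b \<in> C"
proof -
  note mult = linear_mult_eq[OF L Lin]
  show ?thesis
  proof (cases "below m a b")
    case True
    then show ?thesis using mult[OF a(2) b] a DC by auto
  next
    case False
    then have ba: "below m b a" and ab: "m a b = b" using mult[OF a(2) b] by auto
    then have "below m b a0" using below_trans[OF semilattice_semigroup[OF L] b a(2) a0(1)] a0(2) a by blast
    then have "m a0 b = b" using mult[OF a0(1) b] below_antisym[OF L a0(1) b] by auto
    then show ?thesis using a0b ab by simp
  qed
qed

lemma chain_key_element_outside:
  assumes L: "semilattice_on X m" and Lin: "linear_on X m"
    and a0: "a0 \<in> X" "a0 \<notin> C" "\<forall>a\<in>D - C. below m a0 a"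
    and a: "a \<in> D" "a \<in> X" and b: "b \<in> X" and a0b: "m a0 b \<in> C"
  shows "m a b \<in> C"
proof -
  note mult = linear_mult_eq[OF L Lin]
  have nb: "\<not> below m a0 b" and bC: "b \<in> C" using a0b a0(2) mult[OF a0(1) b] by (auto split: if_splits)
  show "m a b \<in> C"
  proof (cases "below m a b")
    case True
    have "a \<in> C"
    proof (rule ccontr)
      assume "a \<notin> C"
      then have "below m a0 a" using a0(3) a by blast
      then show False using below_trans[OF semilattice_semigroup[OF L] a0(1) a(2) b] True nb by blast
    qed
    then show ?thesis using mult[OF a(2) b] True by simp
  next
    case False
    then show ?thesis using mult[OF a(2) b] bC by simp
  qed
qed

lemma chain_key_element:
  assumes fin: "finite X" and L: "semilattice_on X m" and Lin: "linear_on X m"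
    and D: "D \<subseteq> X" "D \<noteq> {}"
  shows "\<exists>a0\<in>D. \<forall>a\<in>D. \<forall>b\<in>X. m a0 b \<in> C \<longrightarrow> m a b \<in> C"
proof (cases "D \<subseteq> C")
  case True
  obtain a0 where a0: "a0 \<in> D" "\<forall>a\<in>D. below m a a0"
    using finite_below_greatest[OF L Lin _ D(2,1)] finite_subset[OF D(1) fin] by blast
  then show ?thesis using chain_key_element_inside[OF L Lin _ _ True] D(1) by blast
next
  case False
  then obtain a0 where a0: "a0 \<in> D - C" "\<forall>a\<in>D - C. below m a0 a"
    using finite_below_least[OF L Lin, of "D - C"] finite_subset[OF _ fin] D(1) by blast
  then show ?thesis using chain_key_element_outside[OF L Lin] D(1) by blast
qed

text \<open>Hence in a finite linear semilattice every member of \<open>\<A> \<B>\<close> contains a product \<open>A\<^sub>0 B\<^sub>0\<close>: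
  take \<open>A\<^sub>0 = D = {a. {b. a b \<in> C} \<in> \<B>}\<close> and \<open>B\<^sub>0 = {b. a\<^sub>0 b \<in> C}\<close> for a key element \<open>a\<^sub>0\<close> of \<open>D\<close>.\<close>

lemma finite_chain_up_mult_witness:
  assumes fin: "finite X" and L: "semilattice_on X m" and Lin: "linear_on X m"
    and A: "\<A> \<in> upsilon X" and B: "\<B> \<in> upsilon X" and C: "C \<in> up_mult X m \<A> \<B>"
  shows "\<exists>A0\<in>\<A>. \<exists>B0\<in>\<B>. \<forall>a\<in>A0. \<forall>b\<in>B0. m a b \<in> C"
proof -
  define D where "D = {a\<in>X. {b\<in>X. m a b \<in> C} \<in> \<B>}"
  have DA: "D \<in> \<A>" using C up_mult_iff[OF A B] unfolding D_def by blast
  have D: "D \<subseteq> X" "D \<noteq> {}" using upsilon_nonempty[OF A DA] unfolding D_def by auto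
  then obtain a0 where a0: "a0 \<in> D" and key: "\<forall>a\<in>D. \<forall>b\<in>X. m a0 b \<in> C \<longrightarrow> m a b \<in> C"
    using chain_key_element[OF fin L Lin] by blast
  define B0 where "B0 = {b\<in>X. m a0 b \<in> C}"
  have "B0 \<in> \<B>" using a0 unfolding B0_def D_def by blast
  moreover have "\<forall>a\<in>D. \<forall>b\<in>B0. m a b \<in> C" using key unfolding B0_def by blast
  ultimately show ?thesis using DA by blast
qed

lemma finite_chain_upsilon_semilattice:
  assumes fin: "finite X" and L: "semilattice_on X m" and Lin: "linear_on X m"
  shows "semilattice_on (upsilon X) (up_mult X m)"
proof -
  have sub: "up_mult X m \<A> \<B> \<subseteq> up_mult X m \<B> \<A>" if A: "\<A> \<in> upsilon X" and B: "\<B> \<in> upsilon X" for \<A> \<B>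
  proof
    fix C assume C: "C \<in> up_mult X m \<A> \<B>"
    then obtain A0 B0 where A0: "A0 \<in> \<A>" and B0: "B0 \<in> \<B>" and AB: "\<forall>a\<in>A0. \<forall>b\<in>B0. m a b \<in> C"
      using finite_chain_up_mult_witness[OF fin L Lin A B] by blast
    have "\<forall>b\<in>B0. \<forall>a\<in>A0. m b a \<in> C"
      using AB semilattice_comm[OF L] upsilon_subset[OF A A0] upsilon_subset[OF B B0] by (metis subsetD)
    moreover have "C \<subseteq> X" using C up_mult_iff[OF A B] by blast
    ultimately show "C \<in> up_mult X m \<B> \<A>" using up_mult_memI[OF B A _ B0 A0] by blast
  qed
  have "up_mult X m \<A> \<B> = up_mult X m \<B> \<A>" if "\<A> \<in> upsilon X" "\<B> \<in> upsilon X" for \<A> \<B>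
    using sub that by blast
  then show ?thesis unfolding semilattice_on_def
    using semigroup_upsilon[OF semilattice_semigroup[OF L]] linear_upsilon_idempotent[OF Lin] by blast
qed

text \<open>A finite linear semilattice is isomorphic to \<open>L\<^sub>n\<close>, \<open>n = |X|\<close>, via the rank
  \<open>x \<mapsto> |{y. y < x}|\<close>.\<close>

lemma finite_linear_semilattice_iso:
  assumes fin: "finite X" and L: "semilattice_on X m" and Lin: "linear_on X m"
  shows "iso_to_L X m (card X)"
proof -
  note S = semilattice_semigroup[OF L]
  note trans = below_trans[OF S] and antisym = below_antisym[OF L] and mult = linear_mult_eq[OF L Lin]
  define lower where "lower x = {y\<in>X. below m y x \<and> y \<noteq> x}" for x
  define rank where "rank x = card (lower x)" for x
  have fin_lower: "finite (lower x)" for x unfolding lower_def using fin by simp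
  have lower_mono: "lower x \<subseteq> lower x'" if x: "x \<in> X" "x' \<in> X" "below m x x'" for x x'
    unfolding lower_def using trans[OF _ x(1,2)] antisym[OF x(1,2)] x by blast
  have rank_less: "rank x < rank x'" if x: "x \<in> X" "x' \<in> X" "below m x x'" "x \<noteq> x'" for x x'
  proof -
    have "lower x \<subset> lower x'" using lower_mono[OF x(1-3)] x unfolding lower_def by blast
    then show ?thesis unfolding rank_def by (rule psubset_card_mono[OF fin_lower])
  qed
  have hom: "rank (m x y) = min (rank x) (rank y)" if x: "x \<in> X" and y: "y \<in> X" for x y
  proof (cases "below m x y")
    case True
    then have "rank x \<le> rank y" unfolding rank_def using card_mono[OF fin_lower lower_mono[OF x y]] by blast
    then show ?thesis using mult[OF x y] True by simp
  next
    case False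
    then have "rank y \<le> rank x" unfolding rank_def using mult(2)[OF x y] card_mono[OF fin_lower lower_mono[OF y x]] by blast
    then show ?thesis using mult[OF x y] False by simp
  qed
  have inj: "inj_on rank X"
  proof (rule inj_onI)
    fix x y assume x: "x \<in> X" and y: "y \<in> X" and eq: "rank x = rank y"
    show "x = y" using rank_less[OF x y] rank_less[OF y x] mult(2)[OF x y] eq by fastforce
  qed
  have "rank ` X \<subseteq> {..<card X}"
  proof
    fix r assume "r \<in> rank ` X"
    then obtain x where x: "x \<in> X" "r = rank x" by blast
    have "rank x \<le> card (X - {x})" unfolding rank_def lower_def by (rule card_mono) (use fin in auto)
    also have "\<dots> < card X" by (rule card_Diff1_less[OF fin x(1)])
    finally show "r \<in> {..<card X}" using x by simp
  qed
  moreover have "card (rank ` X) = card {..<card X}" using card_image[OF inj] by simp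
  ultimately have "rank ` X = {..<card X}" by (simp add: card_subset_eq)
  then have "bij_betw rank X {..<card X}" using inj unfolding bij_betw_def by simp
  then show ?thesis unfolding iso_to_L_def using hom by blast
qed

lemma condition3_base_structure:
  assumes S: "semigroup_on X m" and IC: "idempotents_commute_on (upsilon X) (up_mult X m)"
    and SR: "sub_clifford_on (upsilon X) (up_mult X m) \<or> regular_on (upsilon X) (up_mult X m)"
  shows "finite X \<and> semilattice_on X m \<and> linear_on X m"
proof -
  have R: "\<forall>x\<in>X. \<exists>s\<in>X. m (m x s) x = x"
  proof
    fix x assume x: "x \<in> X"
    from SR show "\<exists>s\<in>X. m (m x s) x = x"
    proof
      assume "sub_clifford_on (upsilon X) (up_mult X m)"
      then show ?thesis by (rule sub_clifford_base_regular[OF S IC _ x])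
    next
      assume "regular_on (upsilon X) (up_mult X m)"
      then show ?thesis by (rule regular_upsilon_base_regular[OF _ x])
    qed
  qed
  have band: "m x x = x" if "x \<in> X" for x by (rule regular_base_band[OF S IC R that])
  have "m x y = m y x" if x: "x \<in> X" and y: "y \<in> X" for x y
    by (rule base_idempotents_commute[OF S IC x band[OF x] y band[OF y]])
  then have L: "semilattice_on X m" unfolding semilattice_on_def using S band by blast
  have Lin: "linear_on X m"
  proof (cases "sub_clifford_on (upsilon X) (up_mult X m)")
    case True
    then show ?thesis by (rule sub_clifford_base_linear[OF L])
  next
    case False
    then have "regular_on (upsilon X) (up_mult X m)" using SR by blast
    then show ?thesis by (rule regular_upsilon_base_linear[OF L])
  qed
  show ?thesis using IC_linear_semilattice_finite[OF L Lin IC] L Lin by blast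
qed

lemma condition4_upsilon_finite_semilattice:
  assumes fin: "finite X" and L: "semilattice_on X m" and Lin: "linear_on X m"
  shows "finite (upsilon X) \<and> semilattice_on (upsilon X) (up_mult X m)"
proof
  have "upsilon X \<subseteq> Pow (Pow X)" using upsilon_subset by blast
  then show "finite (upsilon X)" using fin by (simp add: finite_subset)
  show "semilattice_on (upsilon X) (up_mult X m)" by (rule finite_chain_upsilon_semilattice[OF fin L Lin])
qed

theorem theorem1p4:
  fixes X :: "'a set" and m :: "'a \<Rightarrow> 'a \<Rightarrow> 'a"
  assumes "semigroup_on X m"
  shows "((finite (upsilon X) \<and> semilattice_on (upsilon X) (up_mult X m))
           \<longleftrightarrow> inverse_semigroup_on (upsilon X) (up_mult X m))
       \<and> (inverse_semigroup_on (upsilon X) (up_mult X m)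
           \<longleftrightarrow> (idempotents_commute_on (upsilon X) (up_mult X m) \<and>
                (sub_clifford_on (upsilon X) (up_mult X m) \<or> regular_on (upsilon X) (up_mult X m))))
       \<and> ((idempotents_commute_on (upsilon X) (up_mult X m) \<and>
                (sub_clifford_on (upsilon X) (up_mult X m) \<or> regular_on (upsilon X) (up_mult X m)))
           \<longleftrightarrow> (finite X \<and> semilattice_on X m \<and> linear_on X m \<and> (\<exists>n. iso_to_L X m n)))"
proof -
  let ?P1 = "finite (upsilon X) \<and> semilattice_on (upsilon X) (up_mult X m)"
  let ?P2 = "inverse_semigroup_on (upsilon X) (up_mult X m)"
  let ?P3 = "idempotents_commute_on (upsilon X) (up_mult X m) \<and>
                (sub_clifford_on (upsilon X) (up_mult X m) \<or> regular_on (upsilon X) (up_mult X m))"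
  let ?P4 = "finite X \<and> semilattice_on X m \<and> linear_on X m \<and> (\<exists>n. iso_to_L X m n)"
  have "?P1 \<Longrightarrow> ?P2" using semilattice_inverse by blast
  moreover have "?P2 \<Longrightarrow> ?P3" using inverse_idempotents_commute inverse_regular by blast
  moreover have "?P3 \<Longrightarrow> ?P4" using condition3_base_structure[OF assms] finite_linear_semilattice_iso by blast
  moreover have "?P4 \<Longrightarrow> ?P1" using condition4_upsilon_finite_semilattice by blast
  ultimately show ?thesis by blast
qed

end
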